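(* Let $(\mathcal A,n)$ be a dynamic network congestion game. An infinite path $\rho$ from $c_{\mathsf{src}}$ in the configuration graph is the outcome of a Nash equilibrium if, and only if, for every player $i\in[n]$, every index $1\le l<|\rho|$, and every configuration $c\in\mathrm{dev}_i(\rho(l),\rho(l+1))$, \[\mathrm{cost}_i(\rho_{\ge l})\le \mathrm{val}_{i,c}+\mathrm{cost}_i(\rho(l),c).\]
   Context: An arena is $\mathcal A=(V,E,\mathsf{src},\mathsf{tgt})$ with $V$ finite and $E$ a partial function from $V\times V$ to non-decreasing piecewise-affine functions $\mathbb N\to\mathbb N$ (edge $e$ has cost function $\ell_e$); $\mathsf{tgt}$ has only a self-loop of constant cost $0$ and is reachable from every state. In the dynamic NCG $(\mathcal A,n)$ with players $[n]=\{1,\dots,n\}$, configurations are maps $c:[n]\to V$; $c_{\mathsf{src}}$ maps everyone to $\mathsf{src}$. From $c$, a move vector $(e_i)_i$ with $e_i$ an edge leaving $c(i)$ leads to $c'$ with $c'(i)$ the target of $e_i$; player $i$ pays $w(i)=\ell_{e_i}(u_i)$, $u_i$ being the number of $j$ with $e_j=e_i$. This is a transition $c\Rightarrow c'$ with weight vector $w$; write $\mathrm{cost}_i(c,c')=w(i)$. A path is a sequence of consecutive transitions; $\rho(l)$ is its $l$-th configuration, $\rho_{\ge l}$ its suffix from the $l$-th configuration, and $\mathrm{cost}_i$ of a path is player $i$'s total payment along it ($+\infty$ for an infinite path along which player $i$ never reaches $\mathsf{tgt}$). Strategies map finite histories to edges leaving the player's current state; a profile has a unique outcome; $\mathrm{cost}_i(\sigma)$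 is the cost of the outcome; a Nash equilibrium is a profile where no player can lower their cost by a unilateral change of strategy. Define $\mathrm{dev}_i(c,c')=\{c''\mid c\Rightarrow c'' \text{ and } c''(j)=c'(j)\ \forall j\neq i\}$. The value of configuration $c$ for player $i$ is $\mathrm{val}_{i,c}=\sup_{\sigma_{-i}}\inf_{\sigma_i}\mathrm{cost}_i((\sigma_{-i},\sigma_i),c)$, where the game is started from configuration $c$, $\sigma_{-i}$ ranges over strategies of the other players and $\sigma_i$ over strategies of player $i$. *)

theory Defs
  imports Main "HOL-Library.Extended_Nat"
begin

definition piecewise_affine :: "(nat \<Rightarrow> nat) \<Rightarrow> bool" where
  "piecewise_affine f \<longleftrightarrow>
     (\<exists>(p :: nat list) (a :: nat \<Rightarrow> real) (b :: nat \<Rightarrow> real).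
        p \<noteq> [] \<and> hd p = 0 \<and> sorted p \<and>
        (\<forall>j < length p. \<forall>x. p ! j \<le> x \<and> (Suc j < length p \<longrightarrow> x < p ! Suc j)
              \<longrightarrow> real (f x) = a j * real x + b j))"

definition edge_rel :: "('v \<Rightarrow> 'v \<Rightarrow> (nat \<Rightarrow> nat) option) \<Rightarrow> ('v \<times> 'v) set" where
  "edge_rel E = {(a, b). E a b \<noteq> None}"

(* Arena (V, E, src, tgt); E a b = Some l means there is an edge a -> b with cost function l *)
definition arena :: "'v set \<Rightarrow> ('v \<Rightarrow> 'v \<Rightarrow> (nat \<Rightarrow> nat) option) \<Rightarrow> 'v \<Rightarrow> 'v \<Rightarrow> bool" where
  "arena V E src tgt \<longleftrightarrow>
     finite V \<and> src \<in> V \<and> tgt \<in> V \<and>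
     (\<forall>a b. E a b \<noteq> None \<longrightarrow> a \<in> V \<and> b \<in> V) \<and>
     (\<forall>a b l. E a b = Some l \<longrightarrow> mono l \<and> piecewise_affine l) \<and>
     (\<forall>b. E tgt b \<noteq> None \<longleftrightarrow> b = tgt) \<and>
     E tgt tgt = Some (\<lambda>_. 0) \<and>
     (\<forall>v\<in>V. (v, tgt) \<in> (edge_rel E)\<^sup>*)"

definition is_config :: "'v set \<Rightarrow> nat \<Rightarrow> (nat \<Rightarrow> 'v) \<Rightarrow> bool" where
  "is_config V n c \<longleftrightarrow> (\<forall>i\<in>{1..n}. c i \<in> V) \<and> (\<forall>i. i \<notin> {1..n} \<longrightarrow> c i = undefined)"

definition c_src :: "nat \<Rightarrow> 'v \<Rightarrow> (nat \<Rightarrow> 'v)" where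
  "c_src n src = (\<lambda>i. if i \<in> {1..n} then src else undefined)"

definition trans :: "'v set \<Rightarrow> ('v \<Rightarrow> 'v \<Rightarrow> (nat \<Rightarrow> nat) option) \<Rightarrow> nat
                     \<Rightarrow> (nat \<Rightarrow> 'v) \<Rightarrow> (nat \<Rightarrow> 'v) \<Rightarrow> bool" where
  "trans V E n c c' \<longleftrightarrow> is_config V n c \<and> is_config V n c' \<and>
     (\<forall>i\<in>{1..n}. E (c i) (c' i) \<noteq> None)"

definition load :: "nat \<Rightarrow> (nat \<Rightarrow> 'v) \<Rightarrow> (nat \<Rightarrow> 'v) \<Rightarrow> nat \<Rightarrow> nat" where
  "load n c c' i = card {j\<in>{1..n}. c j = c i \<and> c' j = c' i}"

definition step_cost :: "('v \<Rightarrow> 'v \<Rightarrow> (nat \<Rightarrow> nat) option) \<Rightarrow> nat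
                         \<Rightarrow> (nat \<Rightarrow> 'v) \<Rightarrow> (nat \<Rightarrow> 'v) \<Rightarrow> nat \<Rightarrow> nat" where
  "step_cost E n c c' i = the (E (c i) (c' i)) (load n c c' i)"

definition dev :: "'v set \<Rightarrow> ('v \<Rightarrow> 'v \<Rightarrow> (nat \<Rightarrow> nat) option) \<Rightarrow> nat \<Rightarrow> nat
                   \<Rightarrow> (nat \<Rightarrow> 'v) \<Rightarrow> (nat \<Rightarrow> 'v) \<Rightarrow> (nat \<Rightarrow> 'v) set" where
  "dev V E n i c c' = {c''. trans V E n c c'' \<and> (\<forall>j\<in>{1..n}. j \<noteq> i \<longrightarrow> c'' j = c' j)}"

(* cost of player i along an infinite path (indexed from 0): total payment up to the
   first visit of tgt, or infinity if tgt is never reached (afterwards only cost-0 self-loops) *)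
definition path_cost :: "'v \<Rightarrow> ('v \<Rightarrow> 'v \<Rightarrow> (nat \<Rightarrow> nat) option) \<Rightarrow> nat \<Rightarrow> nat
                         \<Rightarrow> (nat \<Rightarrow> nat \<Rightarrow> 'v) \<Rightarrow> enat" where
  "path_cost tgt E n i \<rho> =
     (if \<exists>k. \<rho> k i = tgt
      then enat (\<Sum>k < (LEAST k. \<rho> k i = tgt). step_cost E n (\<rho> k) (\<rho> (Suc k)) i)
      else \<infinity>)"

definition suffix :: "(nat \<Rightarrow> 'c) \<Rightarrow> nat \<Rightarrow> (nat \<Rightarrow> 'c)" where
  "suffix \<rho> l = (\<lambda>k. \<rho> (k + l))"

definition is_inf_path :: "'v set \<Rightarrow> ('v \<Rightarrow> 'v \<Rightarrow> (nat \<Rightarrow> nat) option) \<Rightarrow> nat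
                           \<Rightarrow> (nat \<Rightarrow> nat \<Rightarrow> 'v) \<Rightarrow> bool" where
  "is_inf_path V E n \<rho> \<longleftrightarrow> (\<forall>k. trans V E n (\<rho> k) (\<rho> (Suc k)))"

definition strategy :: "'v set \<Rightarrow> ('v \<Rightarrow> 'v \<Rightarrow> (nat \<Rightarrow> nat) option) \<Rightarrow> nat
                        \<Rightarrow> ((nat \<Rightarrow> 'v) list \<Rightarrow> 'v) \<Rightarrow> bool" where
  "strategy V E i s \<longleftrightarrow> (\<forall>h. h \<noteq> [] \<longrightarrow> last h i \<in> V \<longrightarrow> E (last h i) (s h) \<noteq> None)"

definition valid_profile :: "'v set \<Rightarrow> ('v \<Rightarrow> 'v \<Rightarrow> (nat \<Rightarrow> nat) option) \<Rightarrow> nat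
                             \<Rightarrow> (nat \<Rightarrow> (nat \<Rightarrow> 'v) list \<Rightarrow> 'v) \<Rightarrow> bool" where
  "valid_profile V E n \<sigma> \<longleftrightarrow> (\<forall>i\<in>{1..n}. strategy V E i (\<sigma> i))"

fun hist :: "nat \<Rightarrow> (nat \<Rightarrow> (nat \<Rightarrow> 'v) list \<Rightarrow> 'v) \<Rightarrow> (nat \<Rightarrow> 'v) \<Rightarrow> nat \<Rightarrow> (nat \<Rightarrow> 'v) list" where
  "hist n \<sigma> c0 0 = [c0]"
| "hist n \<sigma> c0 (Suc k) =
     (let h = hist n \<sigma> c0 k in h @ [(\<lambda>i. if i \<in> {1..n} then \<sigma> i h else undefined)])"

definition outcome :: "nat \<Rightarrow> (nat \<Rightarrow> (nat \<Rightarrow> 'v) list \<Rightarrow> 'v) \<Rightarrow> (nat \<Rightarrow> 'v) \<Rightarrow> (nat \<Rightarrow> nat \<Rightarrow> 'v)" where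
  "outcome n \<sigma> c0 = (\<lambda>k. last (hist n \<sigma> c0 k))"

definition is_NE :: "'v set \<Rightarrow> ('v \<Rightarrow> 'v \<Rightarrow> (nat \<Rightarrow> nat) option) \<Rightarrow> 'v \<Rightarrow> 'v \<Rightarrow> nat
                     \<Rightarrow> (nat \<Rightarrow> (nat \<Rightarrow> 'v) list \<Rightarrow> 'v) \<Rightarrow> bool" where
  "is_NE V E src tgt n \<sigma> \<longleftrightarrow> valid_profile V E n \<sigma> \<and>
     (\<forall>i\<in>{1..n}. \<forall>s. strategy V E i s \<longrightarrow>
        path_cost tgt E n i (outcome n \<sigma> (c_src n src))
          \<le> path_cost tgt E n i (outcome n (\<sigma>(i := s)) (c_src n src)))"

definition val :: "'v set \<Rightarrow> ('v \<Rightarrow> 'v \<Rightarrow> (nat \<Rightarrow> nat) option) \<Rightarrow> 'v \<Rightarrow> nat \<Rightarrow> nat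
                   \<Rightarrow> (nat \<Rightarrow> 'v) \<Rightarrow> enat" where
  "val V E tgt n i c =
     (SUP \<sigma>\<in>{\<sigma>. valid_profile V E n \<sigma>}. INF s\<in>{s. strategy V E i s}.
        path_cost tgt E n i (outcome n (\<sigma>(i := s)) c))"

end

theory Submission
  imports Defs
begin

text \<open>
  If \<open>\<rho>\<close> is the outcome of an equilibrium and player \<open>i\<close> violated the bound at step \<open>l\<close> and
  configuration \<open>c\<close>, she could follow \<open>\<rho>\<close> up to step \<open>l\<close>, move to \<open>c\<close>, and from there play a
  best response to the continuation of the others' strategies. That continuation is one of
  the profiles in the supremum defining the value of \<open>c\<close> for \<open>i\<close>, so the deviation would pay.

  Conversely, let everybody follow \<open>\<rho>\<close> and, as soon as player \<open>i\<close> leaves it by entering \<open>c\<close>,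
  switch to a profile attaining that supremum: whatever \<open>i\<close> does, her cost from \<open>c\<close> is then
  at least the value, and the condition says that the deviation does not pay.
\<close>

lemma arena_edge_in_V: "arena V E src tgt \<Longrightarrow> E a b \<noteq> None \<Longrightarrow> a \<in> V \<and> b \<in> V"
  unfolding arena_def by blast

lemma arena_edge_from_tgt: "arena V E src tgt \<Longrightarrow> E tgt b \<noteq> None \<longleftrightarrow> b = tgt"
  unfolding arena_def by blast

lemma config_eqI:
  assumes "is_config V n c" and "is_config V n c'" and "\<And>j. j \<in> {1..n} \<Longrightarrow> c j = c' j"
  shows "c = c'"
  using assms unfolding is_config_def by (metis ext)

lemma inf_path_config: "is_inf_path V E n \<rho> \<Longrightarrow> is_config V n (\<rho> k)"
  unfolding is_inf_path_def trans_def by blast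

lemma inf_path_edge: "is_inf_path V E n \<rho> \<Longrightarrow> j \<in> {1..n} \<Longrightarrow> E (\<rho> k j) (\<rho> (Suc k) j) \<noteq> None"
  unfolding is_inf_path_def trans_def by blast

lemma inf_path_stays_at_tgt:
  assumes "arena V E src tgt" and "is_inf_path V E n \<rho>" and "i \<in> {1..n}"
    and "\<rho> k i = tgt" and "k \<le> k'"
  shows "\<rho> k' i = tgt"
  using \<open>k \<le> k'\<close>
proof (induction k' rule: dec_induct)
  case (step k')
  then show ?case
    using inf_path_edge[OF assms(2,3), of k'] arena_edge_from_tgt[OF assms(1)] by simp
qed (use assms(4) in simp)

lemma inf_path_not_tgt_before:
  assumes "arena V E src tgt" and "is_inf_path V E n \<rho>" and "i \<in> {1..n}"
    and "\<rho> l i \<noteq> tgt" and "k \<le> l"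
  shows "\<rho> k i \<noteq> tgt"
  using inf_path_stays_at_tgt[OF assms(1-3)] assms(4,5) by blast

lemma dev_config:
  assumes "c \<in> dev V E n i c1 c2"
  shows "is_config V n c" and "j \<in> {1..n} \<Longrightarrow> E (c1 j) (c j) \<noteq> None"
    and "j \<in> {1..n} \<Longrightarrow> j \<noteq> i \<Longrightarrow> c j = c2 j"
  using assms unfolding dev_def trans_def by auto

definition dist_tgt :: "('v \<Rightarrow> 'v \<Rightarrow> (nat \<Rightarrow> nat) option) \<Rightarrow> 'v \<Rightarrow> 'v \<Rightarrow> nat" where
  "dist_tgt E tgt v = (LEAST k. (v, tgt) \<in> edge_rel E ^^ k)"

lemma dist_tgt_path:
  assumes "arena V E src tgt" and "v \<in> V"
  shows "(v, tgt) \<in> edge_rel E ^^ dist_tgt E tgt v"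
proof -
  have "(v, tgt) \<in> (edge_rel E)\<^sup>*" using assms unfolding arena_def by blast
  then obtain k where "(v, tgt) \<in> edge_rel E ^^ k" using rtrancl_power by blast
  then show ?thesis unfolding dist_tgt_def by (rule LeastI)
qed

lemma dist_tgt_eq_0:
  assumes "arena V E src tgt" and "v \<in> V" and "dist_tgt E tgt v = 0"
  shows "v = tgt"
  using dist_tgt_path[OF assms(1,2)] assms(3) by simp

lemma ex_step_toward_tgt:
  assumes ar: "arena V E src tgt" and v: "v \<in> V"
  shows "\<exists>w. E v w \<noteq> None \<and> (v \<noteq> tgt \<longrightarrow> dist_tgt E tgt w < dist_tgt E tgt v)"
proof (cases "v = tgt")
  case True
  then show ?thesis using ar unfolding arena_def by blast
next
  case False
  have path: "(v, tgt) \<in> edge_rel E ^^ dist_tgt E tgt v" using dist_tgt_path[OF ar v] .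
  with False obtain m where m: "dist_tgt E tgt v = Suc m" by (cases "dist_tgt E tgt v") auto
  with path obtain w where "(v, w) \<in> edge_rel E" "(w, tgt) \<in> edge_rel E ^^ m"
    using relpow_Suc_D2 by metis
  moreover from this(2) have "dist_tgt E tgt w \<le> m" unfolding dist_tgt_def by (rule Least_le)
  ultimately show ?thesis using m unfolding edge_rel_def by auto
qed

definition step_toward_tgt :: "('v \<Rightarrow> 'v \<Rightarrow> (nat \<Rightarrow> nat) option) \<Rightarrow> 'v \<Rightarrow> 'v \<Rightarrow> 'v" where
  "step_toward_tgt E tgt v =
     (SOME w. E v w \<noteq> None \<and> (v \<noteq> tgt \<longrightarrow> dist_tgt E tgt w < dist_tgt E tgt v))"

lemma step_toward_tgt:
  assumes "arena V E src tgt" and "v \<in> V"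
  shows "E v (step_toward_tgt E tgt v) \<noteq> None"
    and "v \<noteq> tgt \<Longrightarrow> dist_tgt E tgt (step_toward_tgt E tgt v) < dist_tgt E tgt v"
  using someI_ex[OF ex_step_toward_tgt[OF assms]] unfolding step_toward_tgt_def by blast+

lemma strategy_edge:
  "strategy V E i s \<Longrightarrow> h \<noteq> [] \<Longrightarrow> last h i \<in> V \<Longrightarrow> E (last h i) (s h) \<noteq> None"
  unfolding strategy_def by blast

lemma strategy_step_toward_tgt:
  assumes "arena V E src tgt"
  shows "strategy V E i (\<lambda>h. step_toward_tgt E tgt (last h i))"
  unfolding strategy_def using step_toward_tgt(1)[OF assms] by blast

lemma valid_profile_step_toward_tgt:
  assumes "arena V E src tgt"
  shows "valid_profile V E n (\<lambda>j h. step_toward_tgt E tgt (last h j))"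
  unfolding valid_profile_def using strategy_step_toward_tgt[OF assms] by blast

definition legal_move :: "'v set \<Rightarrow> ('v \<Rightarrow> 'v \<Rightarrow> (nat \<Rightarrow> nat) option) \<Rightarrow> 'v \<Rightarrow> 'v \<Rightarrow> 'v" where
  "legal_move V E v w = (if v \<in> V \<and> E v w = None then SOME w'. E v w' \<noteq> None else w)"

lemma legal_move_eq: "(v \<in> V \<Longrightarrow> E v w \<noteq> None) \<Longrightarrow> legal_move V E v w = w"
  unfolding legal_move_def by auto

lemma legal_move_legal:
  assumes "arena V E src tgt" and "v \<in> V"
  shows "E v (legal_move V E v w) \<noteq> None"
proof -
  have "E v (SOME w'. E v w' \<noteq> None) \<noteq> None"
    using step_toward_tgt(1)[OF assms] by (rule someI)
  then show ?thesis using assms(2) unfolding legal_move_def by auto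
qed

lemma strategy_legal_move:
  assumes "arena V E src tgt"
  shows "strategy V E i (\<lambda>h. legal_move V E (last h i) (f h))"
  unfolding strategy_def using legal_move_legal[OF assms] by blast

lemma strategy_append_history:
  "strategy V E i s \<Longrightarrow> strategy V E i (\<lambda>h. s (pre @ h))"
  unfolding strategy_def by (metis append_is_Nil_conv last_appendR)

lemma valid_profile_append_history:
  "valid_profile V E n \<sigma> \<Longrightarrow> valid_profile V E n (\<lambda>j h. \<sigma> j (pre @ h))"
  unfolding valid_profile_def using strategy_append_history by blast

definition next_config :: "nat \<Rightarrow> (nat \<Rightarrow> (nat \<Rightarrow> 'v) list \<Rightarrow> 'v) \<Rightarrow> (nat \<Rightarrow> 'v) list \<Rightarrow> nat \<Rightarrow> 'v" where
  "next_config n \<sigma> h = (\<lambda>j. if j \<in> {1..n} then \<sigma> j h else undefined)"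

lemma next_config_eqI:
  assumes "is_config V n c" and "\<And>j. j \<in> {1..n} \<Longrightarrow> \<sigma> j h = c j"
  shows "next_config n \<sigma> h = c"
  using assms unfolding next_config_def is_config_def by auto

lemma hist_Suc_next_config: "hist n \<sigma> c0 (Suc k) = hist n \<sigma> c0 k @ [next_config n \<sigma> (hist n \<sigma> c0 k)]"
  by (simp add: next_config_def Let_def)

lemma last_hist: "last (hist n \<sigma> c0 k) = outcome n \<sigma> c0 k"
  by (simp add: outcome_def)

lemma outcome_Suc_hist: "outcome n \<sigma> c0 (Suc k) = next_config n \<sigma> (hist n \<sigma> c0 k)"
  by (simp add: outcome_def hist_Suc_next_config del: hist.simps)

lemma hist_eq_map_outcome: "hist n \<sigma> c0 k = map (outcome n \<sigma> c0) [0..<Suc k]"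
proof (induction k)
  case 0
  show ?case by (simp add: outcome_def)
next
  case (Suc k)
  then show ?case by (simp add: hist_Suc_next_config outcome_Suc_hist del: hist.simps)
qed

lemma outcome_0 [simp]: "outcome n \<sigma> c0 0 = c0"
  by (simp add: outcome_def)

lemma outcome_Suc: "outcome n \<sigma> c0 (Suc k) = next_config n \<sigma> (map (outcome n \<sigma> c0) [0..<Suc k])"
  by (simp only: outcome_Suc_hist hist_eq_map_outcome)

lemma outcome_follows:
  assumes "outcome n \<sigma> c0 = \<rho>" and "j \<in> {1..n}"
  shows "\<sigma> j (map \<rho> [0..<Suc k]) = \<rho> (Suc k) j"
  using outcome_Suc[of n \<sigma> c0 k] assms by (simp add: next_config_def del: upt_Suc)

lemma outcome_cong:
  assumes "\<And>j h. j \<in> {1..n} \<Longrightarrow> h \<noteq> [] \<Longrightarrow> hd h = c0 \<Longrightarrow> \<sigma> j h = \<sigma>' j h"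
  shows "outcome n \<sigma> c0 = outcome n \<sigma>' c0"
proof -
  have "hist n \<sigma> c0 k = hist n \<sigma>' c0 k" for k
  proof (induction k)
    case (Suc k)
    have "hist n \<sigma>' c0 k \<noteq> [] \<and> hd (hist n \<sigma>' c0 k) = c0"
      by (simp add: hist_eq_map_outcome hd_map del: upt_Suc)
    then have "next_config n \<sigma> (hist n \<sigma>' c0 k) = next_config n \<sigma>' (hist n \<sigma>' c0 k)"
      using assms unfolding next_config_def by auto
    with Suc show ?case by (simp add: hist_Suc_next_config del: hist.simps)
  qed simp
  then show ?thesis unfolding outcome_def by simp
qed

lemma outcome_eqI_upto:
  assumes "\<pi> 0 = c0" and "\<And>k. k < m \<Longrightarrow> next_config n \<sigma> (map \<pi> [0..<Suc k]) = \<pi> (Suc k)"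
    and "k \<le> m"
  shows "outcome n \<sigma> c0 k = \<pi> k"
proof -
  have "map (outcome n \<sigma> c0) [0..<Suc k] = map \<pi> [0..<Suc k]" using \<open>k \<le> m\<close>
  proof (induction k)
    case (Suc k)
    then have IH: "map (outcome n \<sigma> c0) [0..<Suc k] = map \<pi> [0..<Suc k]" by simp
    have "outcome n \<sigma> c0 (Suc k) = \<pi> (Suc k)"
      unfolding outcome_Suc IH using Suc.prems by (intro assms(2)) simp
    with IH show ?case by simp
  qed (simp add: assms(1))
  then have "\<forall>x\<in>set [0..<Suc k]. outcome n \<sigma> c0 x = \<pi> x" by (simp only: map_eq_conv)
  then show ?thesis by simp
qed

lemma suffix_outcome:
  "suffix (outcome n \<sigma> c0) m =
     outcome n (\<lambda>j h. \<sigma> j (map (outcome n \<sigma> c0) [0..<m] @ h)) (outcome n \<sigma> c0 m)"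
proof
  fix k
  define pre where "pre = map (outcome n \<sigma> c0) [0..<m]"
  let ?\<pi> = "suffix (outcome n \<sigma> c0) m"
  have pre_app: "pre @ map ?\<pi> [0..<p] = map (outcome n \<sigma> c0) [0..<m + p]" for p
    by (induction p) (simp_all add: pre_def suffix_def add.commute)
  have "next_config n (\<lambda>j h. \<sigma> j (pre @ h)) (map ?\<pi> [0..<Suc k']) = ?\<pi> (Suc k')" for k'
  proof -
    have "next_config n (\<lambda>j h. \<sigma> j (pre @ h)) (map ?\<pi> [0..<Suc k'])
        = next_config n \<sigma> (map (outcome n \<sigma> c0) [0..<m + Suc k'])"
      by (simp only: next_config_def pre_app)
    also have "\<dots> = ?\<pi> (Suc k')" by (simp add: outcome_Suc suffix_def add.commute del: upt_Suc)
    finally show ?thesis .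
  qed
  then have "outcome n (\<lambda>j h. \<sigma> j (pre @ h)) (outcome n \<sigma> c0 m) k = ?\<pi> k"
    by (intro outcome_eqI_upto[where m = k]) (simp_all add: suffix_def)
  then show "?\<pi> k = outcome n (\<lambda>j h. \<sigma> j (pre @ h)) (outcome n \<sigma> c0 m) k"
    by simp
qed

lemma suffix_outcome_after:
  assumes "\<And>k. k \<le> l \<Longrightarrow> outcome n \<sigma> c0 k = \<rho> k" and "outcome n \<sigma> c0 (Suc l) = c"
  shows "suffix (outcome n \<sigma> c0) (Suc l) = outcome n (\<lambda>j h. \<sigma> j (map \<rho> [0..<Suc l] @ h)) c"
proof -
  have "map (outcome n \<sigma> c0) [0..<Suc l] = map \<rho> [0..<Suc l]"
    using assms(1) by (intro map_cong) auto
  with suffix_outcome[of n \<sigma> c0 "Suc l"] assms(2) show ?thesis by (simp only:)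
qed

section \<open>Path costs\<close>

lemma path_cost_eq_0: "\<pi> 0 i = tgt \<Longrightarrow> path_cost tgt E n i \<pi> = 0"
  unfolding path_cost_def by (auto simp: zero_enat_def)

lemma path_cost_Suc:
  assumes "\<pi> 0 i \<noteq> tgt"
  shows "path_cost tgt E n i \<pi> =
           enat (step_cost E n (\<pi> 0) (\<pi> 1) i) + path_cost tgt E n i (suffix \<pi> 1)"
proof (cases "\<exists>k. \<pi> k i = tgt")
  case True
  then obtain k where "\<pi> k i = tgt" by blast
  then have "(LEAST k. \<pi> k i = tgt) = Suc (LEAST k. \<pi> (Suc k) i = tgt)"
    using assms by (rule Least_Suc)
  moreover have "\<exists>k. \<pi> (Suc k) i = tgt"
    using \<open>\<pi> k i = tgt\<close> assms by (cases k) auto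
  ultimately show ?thesis
    using True by (simp add: path_cost_def suffix_def sum.lessThan_Suc_shift del: sum.lessThan_Suc)
next
  case False
  then have "\<not> (\<exists>k. suffix \<pi> 1 k i = tgt)" by (simp add: suffix_def)
  with False show ?thesis by (simp add: path_cost_def)
qed

lemma path_cost_split:
  assumes "\<And>k. k < m \<Longrightarrow> \<pi> k i \<noteq> tgt"
  shows "path_cost tgt E n i \<pi> =
           enat (\<Sum>k<m. step_cost E n (\<pi> k) (\<pi> (Suc k)) i) + path_cost tgt E n i (suffix \<pi> m)"
  using assms
proof (induction m)
  case 0
  show ?case by (simp add: suffix_def zero_enat_def)
next
  case (Suc m)
  have "path_cost tgt E n i (suffix \<pi> m) =
          enat (step_cost E n (\<pi> m) (\<pi> (Suc m)) i) + path_cost tgt E n i (suffix \<pi> (Suc m))"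
    using path_cost_Suc[of "suffix \<pi> m"] Suc.prems by (simp add: suffix_def add.commute)
  with Suc show ?case by (simp add: add.assoc)
qed

lemma path_cost_le_deviation_iff:
  assumes "\<And>k. k \<le> l \<Longrightarrow> \<pi> k = \<rho> k" and "\<And>k. k \<le> l \<Longrightarrow> \<rho> k i \<noteq> tgt"
  shows "path_cost tgt E n i \<rho> \<le> path_cost tgt E n i \<pi> \<longleftrightarrow>
           path_cost tgt E n i (suffix \<rho> l)
             \<le> enat (step_cost E n (\<rho> l) (\<pi> (Suc l)) i) + path_cost tgt E n i (suffix \<pi> (Suc l))"
proof -
  define T where "T = (\<Sum>k<l. step_cost E n (\<rho> k) (\<rho> (Suc k)) i)"
  have "(\<Sum>k<l. step_cost E n (\<pi> k) (\<pi> (Suc k)) i) = T"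
    unfolding T_def using assms(1) by (intro sum.cong) auto
  then have steps: "(\<Sum>k<Suc l. step_cost E n (\<pi> k) (\<pi> (Suc k)) i) =
      T + step_cost E n (\<rho> l) (\<pi> (Suc l)) i"
    using assms(1) by simp
  have "path_cost tgt E n i \<rho> = enat T + path_cost tgt E n i (suffix \<rho> l)"
    unfolding T_def by (intro path_cost_split assms(2)) simp
  moreover have "path_cost tgt E n i \<pi> = enat T +
      (enat (step_cost E n (\<rho> l) (\<pi> (Suc l)) i) + path_cost tgt E n i (suffix \<pi> (Suc l)))"
    by (subst path_cost_split[where m = "Suc l"]) (use assms steps in \<open>auto simp: add.assoc\<close>)
  ultimately show ?thesis by (simp only: enat_add_left_cancel_le) simp
qed

lemma path_cost_le_steps:
  assumes "\<pi> K i = tgt" and "\<And>k. k < K \<Longrightarrow> step_cost E n (\<pi> k) (\<pi> (Suc k)) i \<le> B"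
  shows "path_cost tgt E n i \<pi> \<le> enat (K * B)"
proof -
  define L where "L = (LEAST k. \<pi> k i = tgt)"
  have "L \<le> K" unfolding L_def using assms(1) by (rule Least_le)
  have "(\<Sum>k<L. step_cost E n (\<pi> k) (\<pi> (Suc k)) i) \<le> of_nat (card {..<L}) * B"
    using assms(2) \<open>L \<le> K\<close> by (intro sum_bounded_above) simp
  also have "\<dots> \<le> K * B" using \<open>L \<le> K\<close> by simp
  finally show ?thesis using assms(1) unfolding path_cost_def L_def[symmetric] by auto
qed

lemma load_le: "load n c c' i \<le> n"
proof -
  have "load n c c' i \<le> card {1..n}" unfolding load_def by (rule card_mono) auto
  then show ?thesis by simp
qed

definition edge_cost_bound :: "'v set \<Rightarrow> ('v \<Rightarrow> 'v \<Rightarrow> (nat \<Rightarrow> nat) option) \<Rightarrow> nat \<Rightarrow> nat" where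
  "edge_cost_bound V E n = (\<Sum>a\<in>V. \<Sum>b\<in>V. case E a b of None \<Rightarrow> 0 | Some l \<Rightarrow> l n)"

lemma step_cost_le_edge_cost_bound:
  assumes ar: "arena V E src tgt" and "E (c i) (c' i) \<noteq> None"
  shows "step_cost E n c c' i \<le> edge_cost_bound V E n"
proof -
  from assms(2) obtain l where e: "E (c i) (c' i) = Some l" by blast
  have V: "c i \<in> V" "c' i \<in> V" and fin: "finite V"
    using arena_edge_in_V[OF ar assms(2)] ar unfolding arena_def by auto
  have "step_cost E n c c' i = l (load n c c' i)" unfolding step_cost_def using e by simp
  also have "\<dots> \<le> l n" using ar e load_le unfolding arena_def by (blast dest: monoD)
  also have "\<dots> \<le> (\<Sum>b\<in>V. case E (c i) b of None \<Rightarrow> 0 | Some l \<Rightarrow> l n)"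
    using member_le_sum[OF V(2), of "\<lambda>b. case E (c i) b of None \<Rightarrow> 0 | Some l \<Rightarrow> l n"] fin e
    by simp
  also have "\<dots> \<le> edge_cost_bound V E n"
    unfolding edge_cost_bound_def using fin V(1) by (intro member_le_sum) auto
  finally show ?thesis .
qed

lemma path_cost_step_toward_tgt:
  assumes ar: "arena V E src tgt" and i: "i \<in> {1..n}" and ci: "c i \<in> V"
  shows "path_cost tgt E n i (outcome n (\<sigma>(i := \<lambda>h. step_toward_tgt E tgt (last h i))) c)
           \<le> enat (dist_tgt E tgt (c i) * edge_cost_bound V E n)"
proof -
  define \<pi> where "\<pi> = outcome n (\<sigma>(i := \<lambda>h. step_toward_tgt E tgt (last h i))) c"
  define D where "D = dist_tgt E tgt (c i)"
  have \<pi>_Suc: "\<pi> (Suc k) i = step_toward_tgt E tgt (\<pi> k i)" for k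
    using i by (simp add: \<pi>_def outcome_Suc_hist next_config_def last_hist del: hist.simps)
  have inv: "\<pi> k i \<in> V \<and> (\<pi> k i \<noteq> tgt \<longrightarrow> dist_tgt E tgt (\<pi> k i) + k \<le> D)" for k
  proof (induction k)
    case 0
    show ?case using ci by (simp add: \<pi>_def D_def)
  next
    case (Suc k)
    then have V: "\<pi> k i \<in> V" by blast
    have e: "E (\<pi> k i) (\<pi> (Suc k) i) \<noteq> None"
      unfolding \<pi>_Suc by (rule step_toward_tgt(1)[OF ar V])
    have "dist_tgt E tgt (\<pi> (Suc k) i) + Suc k \<le> D" if "\<pi> (Suc k) i \<noteq> tgt"
    proof -
      have "\<pi> k i \<noteq> tgt" using that e arena_edge_from_tgt[OF ar] by blast
      then have "dist_tgt E tgt (\<pi> (Suc k) i) < dist_tgt E tgt (\<pi> k i)"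
        unfolding \<pi>_Suc by (rule step_toward_tgt(2)[OF ar V])
      with Suc.IH \<open>\<pi> k i \<noteq> tgt\<close> show ?thesis by simp
    qed
    with arena_edge_in_V[OF ar e] show ?case by blast
  qed
  have "\<pi> D i = tgt"
  proof (rule ccontr)
    assume "\<pi> D i \<noteq> tgt"
    with inv[of D] have "dist_tgt E tgt (\<pi> D i) = 0" by simp
    with inv[of D] \<open>\<pi> D i \<noteq> tgt\<close> dist_tgt_eq_0[OF ar] show False by blast
  qed
  moreover have "step_cost E n (\<pi> k) (\<pi> (Suc k)) i \<le> edge_cost_bound V E n" for k
    using step_toward_tgt(1)[OF ar conjunct1[OF inv[of k]]]
    unfolding \<pi>_Suc[symmetric] by (rule step_cost_le_edge_cost_bound[OF ar])
  ultimately show ?thesis unfolding \<pi>_def[symmetric] D_def[symmetric]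
    by (intro path_cost_le_steps)
qed

section \<open>Punishing profiles\<close>

lemma enat_INF_attained:
  fixes f :: "'a \<Rightarrow> enat"
  assumes "A \<noteq> {}"
  shows "\<exists>x\<in>A. f x = (INF x\<in>A. f x)"
proof -
  have "Inf (f ` A) \<in> f ` A"
    using assms unfolding Inf_enat_def by (auto intro: LeastI)
  then show ?thesis by (metis imageE)
qed

definition punishing_profile :: "'v set \<Rightarrow> ('v \<Rightarrow> 'v \<Rightarrow> (nat \<Rightarrow> nat) option) \<Rightarrow> 'v \<Rightarrow> nat \<Rightarrow> nat
    \<Rightarrow> (nat \<Rightarrow> 'v) \<Rightarrow> (nat \<Rightarrow> (nat \<Rightarrow> 'v) list \<Rightarrow> 'v) \<Rightarrow> bool" where
  "punishing_profile V E tgt n i c \<tau> \<longleftrightarrow> valid_profile V E n \<tau> \<and>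
     (\<forall>s. strategy V E i s \<longrightarrow> val V E tgt n i c \<le> path_cost tgt E n i (outcome n (\<tau>(i := s)) c))"

text \<open>The supremum in the value is attained: walking towards the target bounds all the
  infima by a common constant, so only finitely many of them occur.\<close>
lemma ex_punishing_profile:
  assumes ar: "arena V E src tgt" and i: "i \<in> {1..n}" and ci: "c i \<in> V"
  shows "\<exists>\<tau>. punishing_profile V E tgt n i c \<tau>"
proof -
  define F where "F \<sigma> = (INF s\<in>{s. strategy V E i s}. path_cost tgt E n i (outcome n (\<sigma>(i := s)) c))"
    for \<sigma>
  define A where "A = F ` {\<sigma>. valid_profile V E n \<sigma>}"
  have "a \<le> enat (dist_tgt E tgt (c i) * edge_cost_bound V E n)" if "a \<in> A" for a
  proof -
    from that obtain \<sigma> where "a = F \<sigma>" unfolding A_def by blast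
    also have "F \<sigma> \<le> path_cost tgt E n i (outcome n (\<sigma>(i := \<lambda>h. step_toward_tgt E tgt (last h i))) c)"
      unfolding F_def using strategy_step_toward_tgt[OF ar] by (intro INF_lower) simp
    also have "\<dots> \<le> enat (dist_tgt E tgt (c i) * edge_cost_bound V E n)"
      using ar i ci by (rule path_cost_step_toward_tgt)
    finally show ?thesis .
  qed
  then have "finite A" by (rule finite_enat_bounded)
  moreover have "A \<noteq> {}" using valid_profile_step_toward_tgt[OF ar] unfolding A_def by blast
  ultimately have "Sup A \<in> A" by (simp add: Sup_enat_def)
  then obtain \<tau> where \<tau>: "valid_profile V E n \<tau>" "F \<tau> = Sup A"
    unfolding A_def by (metis imageE mem_Collect_eq)
  have "val V E tgt n i c = Sup A" unfolding val_def A_def F_def by simp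
  with \<tau>(2) have "val V E tgt n i c = F \<tau>" by simp
  moreover have "F \<tau> \<le> path_cost tgt E n i (outcome n (\<tau>(i := s)) c)" if "strategy V E i s" for s
    unfolding F_def using that by (intro INF_lower) simp
  ultimately show ?thesis using \<tau>(1) unfolding punishing_profile_def by auto
qed

lemma punishing_profile_some:
  assumes "arena V E src tgt" and "i \<in> {1..n}" and "c i \<in> V"
  shows "punishing_profile V E tgt n i c (SOME \<tau>. punishing_profile V E tgt n i c \<tau>)"
  using ex_punishing_profile[where c = c, OF assms] by (rule someI_ex)

section \<open>Equilibrium outcomes satisfy the condition\<close>

definition deviate_to :: "'v set \<Rightarrow> ('v \<Rightarrow> 'v \<Rightarrow> (nat \<Rightarrow> nat) option) \<Rightarrow> (nat \<Rightarrow> nat \<Rightarrow> 'v) \<Rightarrow> nat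
    \<Rightarrow> (nat \<Rightarrow> 'v) \<Rightarrow> nat \<Rightarrow> ((nat \<Rightarrow> 'v) list \<Rightarrow> 'v) \<Rightarrow> (nat \<Rightarrow> 'v) list \<Rightarrow> 'v" where
  "deviate_to V E \<rho> l c i s h = legal_move V E (last h i)
     (if length h \<le> l then \<rho> (length h) i else if length h = Suc l then c i
      else s (drop (Suc l) h))"

lemma outcome_deviate_to:
  assumes p: "is_inf_path V E n \<rho>" and out: "outcome n \<sigma> c0 = \<rho>"
    and c: "c \<in> dev V E n i (\<rho> l) (\<rho> (Suc l))" and "k \<le> Suc l"
  shows "outcome n (\<sigma>(i := deviate_to V E \<rho> l c i s)) c0 k = (if k \<le> l then \<rho> k else c)"
proof (rule outcome_eqI_upto[where m = "Suc l"])
  define \<pi>' where "\<pi>' k = (if k \<le> l then \<rho> k else c)" for k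
  show "\<pi>' 0 = c0" by (simp add: \<pi>'_def flip: out)
  fix k assume k: "k < Suc l"
  have pre: "map \<pi>' [0..<Suc k] = map \<rho> [0..<Suc k]"
    using k unfolding \<pi>'_def by (intro map_cong) auto
  show "next_config n (\<sigma>(i := deviate_to V E \<rho> l c i s)) (map \<pi>' [0..<Suc k]) = \<pi>' (Suc k)"
  proof (rule next_config_eqI)
    show "is_config V n (\<pi>' (Suc k))"
      unfolding \<pi>'_def using inf_path_config[OF p] dev_config(1)[OF c] by simp
    fix j assume j: "j \<in> {1..n}"
    show "(\<sigma>(i := deviate_to V E \<rho> l c i s)) j (map \<pi>' [0..<Suc k]) = \<pi>' (Suc k) j"
    proof (cases "j = i")
      case True
      have "E (\<rho> k i) (\<pi>' (Suc k) i) \<noteq> None"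
        using k inf_path_edge[OF p j] dev_config(2)[OF c j] True
        unfolding \<pi>'_def by (cases "k = l") auto
      then show ?thesis
        unfolding pre deviate_to_def \<pi>'_def using True k by (auto simp: legal_move_eq)
    next
      case False
      then show ?thesis unfolding pre using k outcome_follows[OF out j] dev_config(3)[OF c j]
        unfolding \<pi>'_def by (cases "k = l") auto
    qed
  qed
qed (use assms in simp_all)

lemma suffix_outcome_deviate_to:
  assumes p: "is_inf_path V E n \<rho>" and out: "outcome n \<sigma> c0 = \<rho>"
    and c: "c \<in> dev V E n i (\<rho> l) (\<rho> (Suc l))" and s: "strategy V E i s"
  shows "suffix (outcome n (\<sigma>(i := deviate_to V E \<rho> l c i s)) c0) (Suc l) =
           outcome n ((\<lambda>j h. \<sigma> j (map \<rho> [0..<Suc l] @ h))(i := s)) c"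
proof -
  have "suffix (outcome n (\<sigma>(i := deviate_to V E \<rho> l c i s)) c0) (Suc l) =
      outcome n (\<lambda>j h. (\<sigma>(i := deviate_to V E \<rho> l c i s)) j (map \<rho> [0..<Suc l] @ h)) c"
    using outcome_deviate_to[OF p out c] by (intro suffix_outcome_after) simp_all
  also have "\<dots> = outcome n ((\<lambda>j h. \<sigma> j (map \<rho> [0..<Suc l] @ h))(i := s)) c"
  proof (rule outcome_cong)
    fix j and h :: "(nat \<Rightarrow> 'a) list" assume "h \<noteq> []"
    with strategy_edge[OF s] show "(\<sigma>(i := deviate_to V E \<rho> l c i s)) j (map \<rho> [0..<Suc l] @ h) =
        ((\<lambda>j h. \<sigma> j (map \<rho> [0..<Suc l] @ h))(i := s)) j h"
      by (simp add: deviate_to_def legal_move_eq)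
  qed
  finally show ?thesis .
qed

lemma NE_outcome_suffix_cost_le_val:
  assumes ar: "arena V E src tgt" and p: "is_inf_path V E n \<rho>"
    and NE: "is_NE V E src tgt n \<sigma>" and out: "outcome n \<sigma> (c_src n src) = \<rho>"
    and i: "i \<in> {1..n}" and c: "c \<in> dev V E n i (\<rho> l) (\<rho> (Suc l))"
  shows "path_cost tgt E n i (suffix \<rho> l) \<le> val V E tgt n i c + enat (step_cost E n (\<rho> l) c i)"
proof (cases "\<rho> l i = tgt")
  case True
  then show ?thesis by (simp add: path_cost_eq_0 suffix_def)
next
  case False
  define \<tau> where "\<tau> = (\<lambda>j h. \<sigma> j (map \<rho> [0..<Suc l] @ h))"
  let ?cost = "\<lambda>s. path_cost tgt E n i (outcome n (\<tau>(i := s)) c)"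
  have "valid_profile V E n \<tau>"
    unfolding \<tau>_def using NE by (intro valid_profile_append_history) (simp add: is_NE_def)
  then have INF_le_val: "(INF s\<in>{s. strategy V E i s}. ?cost s) \<le> val V E tgt n i c"
    unfolding val_def by (intro SUP_upper2[of \<tau>]) auto
  obtain s1 where s1: "strategy V E i s1" "?cost s1 = (INF s\<in>{s. strategy V E i s}. ?cost s)"
    using enat_INF_attained[of "{s. strategy V E i s}" ?cost] strategy_step_toward_tgt[OF ar] by blast
  define s where "s = deviate_to V E \<rho> l c i s1"
  have s: "strategy V E i s" unfolding s_def deviate_to_def by (rule strategy_legal_move[OF ar])
  have prefix: "outcome n (\<sigma>(i := s)) (c_src n src) k = \<rho> k" if "k \<le> l" for k
    using outcome_deviate_to[OF p out c, of k] that unfolding s_def by simp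
  have dev_step: "outcome n (\<sigma>(i := s)) (c_src n src) (Suc l) = c"
    using outcome_deviate_to[OF p out c, of "Suc l"] unfolding s_def by simp
  have suffix: "suffix (outcome n (\<sigma>(i := s)) (c_src n src)) (Suc l) = outcome n (\<tau>(i := s1)) c"
    unfolding s_def \<tau>_def using p out c s1(1) by (rule suffix_outcome_deviate_to)
  from NE i s have "path_cost tgt E n i (outcome n \<sigma> (c_src n src))
      \<le> path_cost tgt E n i (outcome n (\<sigma>(i := s)) (c_src n src))"
    unfolding is_NE_def by blast
  then have "path_cost tgt E n i (suffix \<rho> l) \<le> enat (step_cost E n (\<rho> l) c i) + ?cost s1"
    using path_cost_le_deviation_iff[OF prefix inf_path_not_tgt_before[OF ar p i False]]
    unfolding out by (simp add: dev_step suffix)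
  also have "\<dots> \<le> enat (step_cost E n (\<rho> l) c i) + val V E tgt n i c"
    using s1(2) INF_le_val by (intro add_left_mono) simp
  finally show ?thesis by (simp add: add.commute)
qed

section \<open>The grim-trigger profile\<close>

lemma next_config_unilateral_in_dev:
  assumes ar: "arena V E src tgt" and p: "is_inf_path V E n \<rho>" and out: "outcome n \<sigma> c0 = \<rho>"
    and i: "i \<in> {1..n}" and s: "strategy V E i s"
  shows "next_config n (\<sigma>(i := s)) (map \<rho> [0..<Suc l]) \<in> dev V E n i (\<rho> l) (\<rho> (Suc l))"
proof -
  define c where "c = next_config n (\<sigma>(i := s)) (map \<rho> [0..<Suc l])"
  have others: "c j = \<rho> (Suc l) j" if "j \<in> {1..n}" "j \<noteq> i" for j
    using that outcome_follows[OF out] unfolding c_def next_config_def by simp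
  have "\<rho> l i \<in> V" using inf_path_config[OF p, of l] i unfolding is_config_def by blast
  then have edge_i: "E (\<rho> l i) (c i) \<noteq> None"
    using strategy_edge[OF s, of "map \<rho> [0..<Suc l]"] i by (simp add: c_def next_config_def)
  have "c \<in> dev V E n i (\<rho> l) (\<rho> (Suc l))"
    unfolding dev_def trans_def
  proof (intro CollectI conjI ballI impI)
    show "is_config V n (\<rho> l)" by (rule inf_path_config[OF p])
    show "is_config V n c"
      using others arena_edge_in_V[OF ar edge_i] inf_path_config[OF p, of "Suc l"]
      by (auto simp: c_def next_config_def is_config_def)
    fix j assume j: "j \<in> {1..n}"
    show "E (\<rho> l j) (c j) \<noteq> None"
      using edge_i others[OF j] inf_path_edge[OF p j, of l] by (cases "j = i") auto
    assume "j \<noteq> i"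
    then show "c j = \<rho> (Suc l) j" using others[OF j] by simp
  qed
  then show ?thesis unfolding c_def .
qed

lemma unilateral_deviation:
  assumes ar: "arena V E src tgt" and p: "is_inf_path V E n \<rho>" and out: "outcome n \<sigma> c0 = \<rho>"
    and i: "i \<in> {1..n}" and s: "strategy V E i s" and ne: "outcome n (\<sigma>(i := s)) c0 \<noteq> \<rho>"
  obtains l where "\<And>k. k \<le> l \<Longrightarrow> outcome n (\<sigma>(i := s)) c0 k = \<rho> k"
    and "outcome n (\<sigma>(i := s)) c0 (Suc l) \<noteq> \<rho> (Suc l)"
    and "outcome n (\<sigma>(i := s)) c0 (Suc l) \<in> dev V E n i (\<rho> l) (\<rho> (Suc l))"
proof -
  define \<pi> where "\<pi> = outcome n (\<sigma>(i := s)) c0"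
  obtain m where "\<pi> m \<noteq> \<rho> m" using ne unfolding \<pi>_def by auto
  moreover have "\<pi> 0 = \<rho> 0" using out unfolding \<pi>_def by auto
  ultimately obtain l where prefix: "\<And>k. k \<le> l \<Longrightarrow> \<pi> k = \<rho> k" and ne: "\<pi> (Suc l) \<noteq> \<rho> (Suc l)"
    using ex_least_nat_less[of "\<lambda>k. \<pi> k \<noteq> \<rho> k"] by blast
  have "\<pi> (Suc l) = next_config n (\<sigma>(i := s)) (map \<pi> [0..<Suc l])"
    unfolding \<pi>_def by (rule outcome_Suc)
  moreover have "map \<pi> [0..<Suc l] = map \<rho> [0..<Suc l]" using prefix by (intro map_cong) auto
  ultimately have "\<pi> (Suc l) \<in> dev V E n i (\<rho> l) (\<rho> (Suc l))"
    using next_config_unilateral_in_dev[OF ar p out i s] by (simp only:)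
  with prefix ne show ?thesis using that unfolding \<pi>_def by blast
qed

definition first_deviation :: "(nat \<Rightarrow> 'c) \<Rightarrow> 'c list \<Rightarrow> nat" where
  "first_deviation \<rho> h = (LEAST k. k < length h \<and> h ! k \<noteq> \<rho> k)"

lemma first_deviation_append:
  assumes "h \<noteq> []" and "hd h \<noteq> \<rho> m"
  shows "first_deviation \<rho> (map \<rho> [0..<m] @ h) = m"
  unfolding first_deviation_def
proof (rule Least_equality)
  show "m < length (map \<rho> [0..<m] @ h) \<and> (map \<rho> [0..<m] @ h) ! m \<noteq> \<rho> m"
    using assms by (simp add: nth_append hd_conv_nth)
next
  fix y assume "y < length (map \<rho> [0..<m] @ h) \<and> (map \<rho> [0..<m] @ h) ! y \<noteq> \<rho> y"
  then show "m \<le> y" by (cases "y < m") (auto simp: nth_append)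
qed

text \<open>For a unilateral deviation the \<open>SOME\<close> picks the deviator; on other histories the
  choice of the punished player is irrelevant.\<close>
definition trigger_profile :: "'v set \<Rightarrow> ('v \<Rightarrow> 'v \<Rightarrow> (nat \<Rightarrow> nat) option) \<Rightarrow> 'v \<Rightarrow> nat
    \<Rightarrow> (nat \<Rightarrow> nat \<Rightarrow> 'v) \<Rightarrow> nat \<Rightarrow> (nat \<Rightarrow> 'v) list \<Rightarrow> 'v" where
  "trigger_profile V E tgt n \<rho> j h = legal_move V E (last h j)
     (if h = map \<rho> [0..<length h] then \<rho> (length h) j
      else let d = first_deviation \<rho> h; c = h ! d; i = SOME i. i \<in> {1..n} \<and> c i \<noteq> \<rho> d i
           in (SOME \<tau>. punishing_profile V E tgt n i c \<tau>) j (drop d h))"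

lemma valid_trigger_profile:
  assumes "arena V E src tgt"
  shows "valid_profile V E n (trigger_profile V E tgt n \<rho>)"
  unfolding valid_profile_def trigger_profile_def by (intro ballI strategy_legal_move[OF assms])

lemma outcome_trigger_profile:
  assumes "\<rho> 0 = c0" and p: "is_inf_path V E n \<rho>"
  shows "outcome n (trigger_profile V E tgt n \<rho>) c0 = \<rho>"
proof
  fix k
  have "next_config n (trigger_profile V E tgt n \<rho>) (map \<rho> [0..<Suc k']) = \<rho> (Suc k')" for k'
  proof (rule next_config_eqI[OF inf_path_config[OF p]])
    fix j assume "j \<in> {1..n}"
    with inf_path_edge[OF p this] show "trigger_profile V E tgt n \<rho> j (map \<rho> [0..<Suc k']) = \<rho> (Suc k') j"
      unfolding trigger_profile_def by (simp add: legal_move_eq)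
  qed
  then show "outcome n (trigger_profile V E tgt n \<rho>) c0 k = \<rho> k"
    using assms(1) by (intro outcome_eqI_upto[where m = k]) auto
qed

lemma trigger_profile_after_deviation:
  assumes ar: "arena V E src tgt" and i: "i \<in> {1..n}" and c: "c \<in> dev V E n i (\<rho> l) (\<rho> (Suc l))"
    and ci: "c i \<noteq> \<rho> (Suc l) i" and j: "j \<in> {1..n}" and h: "h \<noteq> []" "hd h = c"
  shows "trigger_profile V E tgt n \<rho> j (map \<rho> [0..<Suc l] @ h)
           = (SOME \<tau>. punishing_profile V E tgt n i c \<tau>) j h"
proof -
  let ?H = "map \<rho> [0..<Suc l] @ h"
  define \<tau> where "\<tau> = (SOME \<tau>. punishing_profile V E tgt n i c \<tau>)"
  have "c i \<in> V" using dev_config(1)[OF c] i unfolding is_config_def by blast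
  then have "valid_profile V E n \<tau>"
    using punishing_profile_some[OF ar i] unfolding \<tau>_def punishing_profile_def by blast
  then have "strategy V E j (\<tau> j)" using j unfolding valid_profile_def by blast
  have legal: "legal_move V E (last h j) (\<tau> j h) = \<tau> j h"
    using strategy_edge[OF \<open>strategy V E j (\<tau> j)\<close> h(1)] by (rule legal_move_eq)
  have H_dev: "?H ! Suc l = c" using h by (simp add: nth_append hd_conv_nth del: upt_Suc)
  have "?H \<noteq> map \<rho> [0..<length ?H]"
  proof
    assume "?H = map \<rho> [0..<length ?H]"
    then have "?H ! Suc l = map \<rho> [0..<length ?H] ! Suc l" by (rule arg_cong)
    also have "\<dots> = \<rho> (Suc l)" using h(1) by (simp del: upt_Suc)
    finally show False using H_dev ci by simp
  qed
  moreover have "first_deviation \<rho> ?H = Suc l"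
    using h ci by (intro first_deviation_append) auto
  moreover have "(SOME i'. i' \<in> {1..n} \<and> c i' \<noteq> \<rho> (Suc l) i') = i"
    using i ci dev_config(3)[OF c] by (intro some_equality) auto
  ultimately show ?thesis
    unfolding trigger_profile_def using H_dev h(1) legal[unfolded \<tau>_def] by (simp add: Let_def del: upt_Suc)
qed

lemma dev_ne_next_config:
  assumes ar: "arena V E src tgt" and p: "is_inf_path V E n \<rho>" and i: "i \<in> {1..n}"
    and c: "c \<in> dev V E n i (\<rho> l) (\<rho> (Suc l))" and ne: "c \<noteq> \<rho> (Suc l)"
  shows "c i \<noteq> \<rho> (Suc l) i" and "\<rho> l i \<noteq> tgt"
proof -
  show ci: "c i \<noteq> \<rho> (Suc l) i"
    using ne config_eqI[OF dev_config(1)[OF c] inf_path_config[OF p]] dev_config(3)[OF c] by blast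
  show "\<rho> l i \<noteq> tgt"
  proof
    assume "\<rho> l i = tgt"
    then have "c i = tgt" "\<rho> (Suc l) i = tgt"
      using dev_config(2)[OF c i] inf_path_edge[OF p i, of l] arena_edge_from_tgt[OF ar] by auto
    with ci show False by simp
  qed
qed

lemma trigger_profile_deviation_unprofitable:
  assumes ar: "arena V E src tgt" and r0: "\<rho> 0 = c0" and p: "is_inf_path V E n \<rho>"
    and cond: "\<forall>i\<in>{1..n}. \<forall>l. \<forall>c\<in>dev V E n i (\<rho> l) (\<rho> (Suc l)).
      path_cost tgt E n i (suffix \<rho> l) \<le> val V E tgt n i c + enat (step_cost E n (\<rho> l) c i)"
    and i: "i \<in> {1..n}" and s: "strategy V E i s"
  shows "path_cost tgt E n i \<rho>
           \<le> path_cost tgt E n i (outcome n ((trigger_profile V E tgt n \<rho>)(i := s)) c0)"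
proof (cases "outcome n ((trigger_profile V E tgt n \<rho>)(i := s)) c0 = \<rho>")
  case False
  define \<sigma> where "\<sigma> = trigger_profile V E tgt n \<rho>"
  have out: "outcome n \<sigma> c0 = \<rho>" unfolding \<sigma>_def using r0 p by (rule outcome_trigger_profile)
  define \<pi> where "\<pi> = outcome n (\<sigma>(i := s)) c0"
  obtain l where prefix: "\<And>k. k \<le> l \<Longrightarrow> \<pi> k = \<rho> k"
    and ne: "\<pi> (Suc l) \<noteq> \<rho> (Suc l)" and dev: "\<pi> (Suc l) \<in> dev V E n i (\<rho> l) (\<rho> (Suc l))"
    using unilateral_deviation[OF ar p out i s False[folded \<sigma>_def]] unfolding \<pi>_def by blast
  define c where "c = \<pi> (Suc l)"
  note c = dev[folded c_def]
  note ci = dev_ne_next_config(1)[OF ar p i c ne[folded c_def]]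
  define \<tau> where "\<tau> = (SOME \<tau>. punishing_profile V E tgt n i c \<tau>)"
  define s' where "s' h = s (map \<rho> [0..<Suc l] @ h)" for h
  have "c i \<in> V" using dev_config(1)[OF c] i unfolding is_config_def by blast
  then have val_le: "val V E tgt n i c \<le> path_cost tgt E n i (outcome n (\<tau>(i := s')) c)"
    using punishing_profile_some[OF ar i] strategy_append_history[OF s]
    unfolding \<tau>_def s'_def punishing_profile_def by blast
  have "suffix \<pi> (Suc l) = outcome n (\<lambda>j h. (\<sigma>(i := s)) j (map \<rho> [0..<Suc l] @ h)) c"
    unfolding \<pi>_def c_def using prefix by (intro suffix_outcome_after) (simp_all add: \<pi>_def)
  also have "\<dots> = outcome n (\<tau>(i := s')) c"
    using trigger_profile_after_deviation[OF ar i c ci]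
    unfolding \<sigma>_def s'_def \<tau>_def by (intro outcome_cong) simp
  finally have suffix_\<pi>: "suffix \<pi> (Suc l) = outcome n (\<tau>(i := s')) c" .
  have "path_cost tgt E n i (suffix \<rho> l) \<le> val V E tgt n i c + enat (step_cost E n (\<rho> l) c i)"
    using cond i c by blast
  also have "\<dots> \<le> path_cost tgt E n i (outcome n (\<tau>(i := s')) c) + enat (step_cost E n (\<rho> l) c i)"
    using val_le by (rule add_right_mono)
  also have "\<dots> = enat (step_cost E n (\<rho> l) c i) + path_cost tgt E n i (suffix \<pi> (Suc l))"
    by (simp add: suffix_\<pi> add.commute)
  finally show ?thesis
    unfolding \<sigma>_def[symmetric] \<pi>_def[symmetric] c_def
    using inf_path_not_tgt_before[OF ar p i dev_ne_next_config(2)[OF ar p i dev ne]] prefix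
    by (subst path_cost_le_deviation_iff[where l = l]) auto
qed simp

lemma trigger_profile_is_NE:
  assumes ar: "arena V E src tgt" and r0: "\<rho> 0 = c_src n src" and p: "is_inf_path V E n \<rho>"
    and cond: "\<forall>i\<in>{1..n}. \<forall>l. \<forall>c\<in>dev V E n i (\<rho> l) (\<rho> (Suc l)).
      path_cost tgt E n i (suffix \<rho> l) \<le> val V E tgt n i c + enat (step_cost E n (\<rho> l) c i)"
  shows "is_NE V E src tgt n (trigger_profile V E tgt n \<rho>)"
proof -
  have out: "outcome n (trigger_profile V E tgt n \<rho>) (c_src n src) = \<rho>"
    using r0 p by (rule outcome_trigger_profile)
  show ?thesis
    unfolding is_NE_def out
    using valid_trigger_profile[OF ar] trigger_profile_deviation_unprofitable[OF ar r0 p cond]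
    by blast
qed

theorem mainTheorem5:
  fixes V :: "'v set" and E :: "'v \<Rightarrow> 'v \<Rightarrow> (nat \<Rightarrow> nat) option"
    and src tgt :: 'v and n :: nat and \<rho> :: "nat \<Rightarrow> nat \<Rightarrow> 'v"
  assumes "arena V E src tgt"
    and "\<rho> 0 = c_src n src"
    and "is_inf_path V E n \<rho>"
  shows "(\<exists>\<sigma>. is_NE V E src tgt n \<sigma> \<and> outcome n \<sigma> (c_src n src) = \<rho>) \<longleftrightarrow>
         (\<forall>i\<in>{1..n}. \<forall>l. \<forall>c\<in>dev V E n i (\<rho> l) (\<rho> (Suc l)).
            path_cost tgt E n i (suffix \<rho> l) \<le> val V E tgt n i c + enat (step_cost E n (\<rho> l) c i))"
proof
  assume "\<exists>\<sigma>. is_NE V E src tgt n \<sigma> \<and> outcome n \<sigma> (c_src n src) = \<rho>"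
  then show "\<forall>i\<in>{1..n}. \<forall>l. \<forall>c\<in>dev V E n i (\<rho> l) (\<rho> (Suc l)).
      path_cost tgt E n i (suffix \<rho> l) \<le> val V E tgt n i c + enat (step_cost E n (\<rho> l) c i)"
    using NE_outcome_suffix_cost_le_val[OF assms(1,3)] by blast
next
  assume "\<forall>i\<in>{1..n}. \<forall>l. \<forall>c\<in>dev V E n i (\<rho> l) (\<rho> (Suc l)).
      path_cost tgt E n i (suffix \<rho> l) \<le> val V E tgt n i c + enat (step_cost E n (\<rho> l) c i)"
  then have "is_NE V E src tgt n (trigger_profile V E tgt n \<rho>)"
    by (rule trigger_profile_is_NE[OF assms])
  moreover have "outcome n (trigger_profile V E tgt n \<rho>) (c_src n src) = \<rho>"
    using assms(2,3) by (rule outcome_trigger_profile)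
  ultimately show "\<exists>\<sigma>. is_NE V E src tgt n \<sigma> \<and> outcome n \<sigma> (c_src n src) = \<rho>" by blast
qed

end
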